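(* Let $H$ be a connected false-twin-free graph with $|V(H)|\ge 7$. Suppose $B$ is a biclique of $H$ such that either the subgraph induced by $B$ contains an induced $K_{1,3}$, or the subgraph induced by $B$ is a $C_4$. Let $q$ be the vertex of $G=KB(H)$ corresponding to $B$. Then $d_G(q)\ge 3$.
   Context: All graphs are finite, simple, undirected and connected. A biclique of a graph $H$ is a maximal (with respect to vertex-set inclusion) set of vertices inducing a complete bipartite subgraph $K_{r,s}$ with $r,s\ge 1$. The biclique graph $KB(H)$ is the intersection graph of the family of all bicliques of $H$: its vertices are the bicliques of $H$, and two bicliques are adjacent iff they share at least one vertex. Two distinct vertices $u,v$ are false-twins if $N(u)=N(v)$, where $N(\cdot)$ is the open neighborhood; a graph is false-twin-free if it has no pair of false-twins. *)

theory Defs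
  imports Main
begin

definition simple_graph :: "'a set \<Rightarrow> ('a \<Rightarrow> 'a \<Rightarrow> bool) \<Rightarrow> bool" where
  "simple_graph V E \<longleftrightarrow> finite V \<and> (\<forall>x y. E x y \<longrightarrow> x \<in> V \<and> y \<in> V)
     \<and> (\<forall>x y. E x y \<longrightarrow> E y x) \<and> (\<forall>x. \<not> E x x)"

definition connected_graph :: "'a set \<Rightarrow> ('a \<Rightarrow> 'a \<Rightarrow> bool) \<Rightarrow> bool" where
  "connected_graph V E \<longleftrightarrow> V \<noteq> {} \<and> (\<forall>x\<in>V. \<forall>y\<in>V. E\<^sup>*\<^sup>* x y)"

definition nbhd :: "('a \<Rightarrow> 'a \<Rightarrow> bool) \<Rightarrow> 'a \<Rightarrow> 'a set" where
  "nbhd E v = {u. E v u}"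

definition false_twin_free :: "'a set \<Rightarrow> ('a \<Rightarrow> 'a \<Rightarrow> bool) \<Rightarrow> bool" where
  "false_twin_free V E \<longleftrightarrow> (\<forall>u\<in>V. \<forall>v\<in>V. u \<noteq> v \<longrightarrow> nbhd E u \<noteq> nbhd E v)"

definition induces_complete_bipartite :: "('a \<Rightarrow> 'a \<Rightarrow> bool) \<Rightarrow> 'a set \<Rightarrow> bool" where
  "induces_complete_bipartite E S \<longleftrightarrow> (\<exists>X Y. X \<noteq> {} \<and> Y \<noteq> {} \<and> X \<inter> Y = {} \<and> X \<union> Y = S
     \<and> (\<forall>x\<in>X. \<forall>x'\<in>X. \<not> E x x') \<and> (\<forall>y\<in>Y. \<forall>y'\<in>Y. \<not> E y y')
     \<and> (\<forall>x\<in>X. \<forall>y\<in>Y. E x y))"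

definition is_biclique :: "'a set \<Rightarrow> ('a \<Rightarrow> 'a \<Rightarrow> bool) \<Rightarrow> 'a set \<Rightarrow> bool" where
  "is_biclique V E B \<longleftrightarrow> B \<subseteq> V \<and> induces_complete_bipartite E B
     \<and> (\<forall>B'. B \<subseteq> B' \<and> B' \<subseteq> V \<and> induces_complete_bipartite E B' \<longrightarrow> B' = B)"

definition bicliques :: "'a set \<Rightarrow> ('a \<Rightarrow> 'a \<Rightarrow> bool) \<Rightarrow> 'a set set" where
  "bicliques V E = {B. is_biclique V E B}"

definition KB_adj :: "'a set \<Rightarrow> ('a \<Rightarrow> 'a \<Rightarrow> bool) \<Rightarrow> 'a set \<Rightarrow> 'a set \<Rightarrow> bool" where
  "KB_adj V E B1 B2 \<longleftrightarrow> B1 \<in> bicliques V E \<and> B2 \<in> bicliques V E \<and> B1 \<noteq> B2 \<and> B1 \<inter> B2 \<noteq> {}"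

definition degree :: "('b \<Rightarrow> 'b \<Rightarrow> bool) \<Rightarrow> 'b \<Rightarrow> nat" where
  "degree G v = card {u. G v u}"

definition has_induced_claw :: "('a \<Rightarrow> 'a \<Rightarrow> bool) \<Rightarrow> 'a set \<Rightarrow> bool" where
  "has_induced_claw E S \<longleftrightarrow> (\<exists>v a b c. v \<in> S \<and> a \<in> S \<and> b \<in> S \<and> c \<in> S
     \<and> E v a \<and> E v b \<and> E v c \<and> a \<noteq> b \<and> a \<noteq> c \<and> b \<noteq> c
     \<and> \<not> E a b \<and> \<not> E a c \<and> \<not> E b c)"

definition induces_C4 :: "('a \<Rightarrow> 'a \<Rightarrow> bool) \<Rightarrow> 'a set \<Rightarrow> bool" where
  "induces_C4 E S \<longleftrightarrow> (\<exists>a b c d. S = {a, b, c, d} \<and> distinct [a, b, c, d]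
     \<and> E a b \<and> E b c \<and> E c d \<and> E d a \<and> \<not> E a c \<and> \<not> E b d)"

end

theory Submission
  imports Defs
begin

text \<open>If B had at most two neighbours in KB(H), two bicliques D1 and D2 would contain every
  complete bipartite set that meets B without lying inside it, in particular every edge and every
  induced path on three vertices leaving B. Adjacency inside a complete bipartite set obeys a parity
  rule, and false twins in B are separated by outside vertices, hence by D1 or D2; together these
  leave very little room for the vertices outside B.

  If B contains a claw with centre in X and leaves in Y, no outside vertex sees X and the outside
  vertices adjacent to Y form an independent set whose Y-neighbourhoods are traces of D1 and D2.
  So there are at most two outside vertices, X is a single vertex, and the vertices of Y are
  distinguished by their outside neighbourhoods; seven vertices then force two outside vertices
  whose neighbourhoods in Y cross, which D1 and D2 cannot accommodate.

  If B is a C4, every outside vertex has a neighbour in B and is a corner or a pendant of B.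
  Outside vertices with equal neighbourhoods in B would be false twins, and a case analysis
  shows that no three outside vertices can coexist, so H has at most six vertices.\<close>

lemma complete_bipartite_adj_parity:
  assumes simple: "simple_graph V E" and cb: "induces_complete_bipartite E D"
    and "p \<in> D" "q \<in> D" "r \<in> D"
  shows "E p r \<longleftrightarrow> (E p q \<longleftrightarrow> \<not> E q r)"
proof -
  from cb obtain P Q where PQ: "P \<inter> Q = {}" "P \<union> Q = D"
     "\<forall>x\<in>P. \<forall>x'\<in>P. \<not> E x x'" "\<forall>y\<in>Q. \<forall>y'\<in>Q. \<not> E y y'" "\<forall>x\<in>P. \<forall>y\<in>Q. E x y"
    unfolding induces_complete_bipartite_def by blast
  have sym: "\<And>x y. E x y \<Longrightarrow> E y x" using simple unfolding simple_graph_def by blast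
  have side: "E s t \<longleftrightarrow> (s \<in> P \<longleftrightarrow> t \<notin> P)" if "s \<in> D" "t \<in> D" for s t
  proof -
    from that PQ(2) have "s \<in> P \<or> s \<in> Q" "t \<in> P \<or> t \<in> Q" by blast+
    then show ?thesis using PQ(1,3,4,5) sym by (elim disjE) blast+
  qed
  show ?thesis using side[OF assms(3,4)] side[OF assms(4,5)] side[OF assms(3,5)]
    by (cases "p \<in> P"; cases "q \<in> P"; cases "r \<in> P") simp_all
qed

lemma star_induces_complete_bipartite:
  assumes "simple_graph V E" "c \<notin> L" "L \<noteq> {}" "\<forall>l\<in>L. E c l" "\<forall>l\<in>L. \<forall>l'\<in>L. \<not> E l l'"
  shows "induces_complete_bipartite E (insert c L)"
  unfolding induces_complete_bipartite_def
  apply (rule exI[of _ "{c}"], rule exI[of _ L])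
  using assms unfolding simple_graph_def by auto

lemma complete_bipartite_subset_biclique:
  assumes "finite V" "S \<subseteq> V" "induces_complete_bipartite E S"
  shows "\<exists>D\<in>bicliques V E. S \<subseteq> D"
proof -
  let ?F = "{T. S \<subseteq> T \<and> T \<subseteq> V \<and> induces_complete_bipartite E T}"
  have "?F \<subseteq> Pow V" by auto
  then have fin: "finite ?F" using assms(1) by (meson finite_Pow_iff finite_subset)
  have S: "S \<in> ?F" using assms by auto
  obtain D where D: "D \<in> ?F" "\<forall>T\<in>?F. D \<le> T \<longrightarrow> D = T"
    using finite_has_maximal2[OF fin S] by blast
  have "is_biclique V E D" unfolding is_biclique_def
  proof (intro conjI allI impI)
    show "D \<subseteq> V" "induces_complete_bipartite E D" using D(1) by auto
    fix B' assume "D \<subseteq> B' \<and> B' \<subseteq> V \<and> induces_complete_bipartite E B'"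
    then have "B' \<in> ?F" "D \<le> B'" using D(1) by auto
    then show "B' = D" using D(2) by blast
  qed
  then show ?thesis using D(1) unfolding bicliques_def by blast
qed

lemma connected_graph_closed_superset:
  assumes "connected_graph V E" "x \<in> U" "x \<in> V" and closed: "\<And>s t. s \<in> U \<Longrightarrow> E s t \<Longrightarrow> t \<in> U"
  shows "V \<subseteq> U"
proof
  fix t assume "t \<in> V"
  then have "E\<^sup>*\<^sup>* x t" using assms(1,3) unfolding connected_graph_def by blast
  then show "t \<in> U" by induction (use assms(2) closed in blast)+
qed

lemma subset_doubleton_of_card_le_2:
  assumes "finite A" "card A \<le> 2" "A \<subseteq> S" "b \<in> S"
  shows "\<exists>p\<in>S. \<exists>q\<in>S. A \<subseteq> {p, q}"
proof -
  have "card A = 0 \<or> card A = 1 \<or> card A = 2" using assms(2) by auto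
  then show ?thesis
  proof (elim disjE)
    assume "card A = 0" then show ?thesis using assms(1,4) by auto
  next
    assume "card A = 1" then show ?thesis using assms(3) by (auto simp: card_1_singleton_iff)
  next
    assume "card A = 2" then show ?thesis using assms(3) by (auto simp: card_2_iff)
  qed
qed

lemma card_le_2_if_no_three:
  assumes "finite A" and no_three: "\<And>a b c. a \<in> A \<Longrightarrow> b \<in> A \<Longrightarrow> c \<in> A \<Longrightarrow> a \<noteq> b \<Longrightarrow> a \<noteq> c \<Longrightarrow> b \<noteq> c \<Longrightarrow> False"
  shows "card A \<le> 2"
proof (rule ccontr)
  assume "\<not> card A \<le> 2"
  then obtain T where "T \<subseteq> A" "card T = 3" using obtain_subset_with_card_n[of 3 A] by force
  then show False using no_three unfolding card_3_iff by blast
qed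

text \<open>When B has fewer than two neighbours in KB(H), B itself serves as a dummy D1 or D2.\<close>
lemma biclique_degree_le_2_cover:
  assumes simple: "simple_graph V E" and B: "B \<in> bicliques V E"
    and deg: "degree (KB_adj V E) B \<le> 2"
  obtains D1 D2 where "D1 \<in> bicliques V E" "D2 \<in> bicliques V E"
    "\<And>S. S \<subseteq> V \<Longrightarrow> induces_complete_bipartite E S \<Longrightarrow> S \<inter> B \<noteq> {} \<Longrightarrow> \<not> S \<subseteq> B
      \<Longrightarrow> S \<subseteq> D1 \<or> S \<subseteq> D2"
proof -
  have finV: "finite V" using simple unfolding simple_graph_def by blast
  let ?N = "{D. KB_adj V E B D}"
  have N_sub: "?N \<subseteq> bicliques V E" unfolding KB_adj_def by blast
  have "bicliques V E \<subseteq> Pow V" unfolding bicliques_def is_biclique_def by blast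
  then have "finite ?N" using N_sub finV by (meson finite_Pow_iff finite_subset)
  then obtain D1 D2 where D: "D1 \<in> bicliques V E" "D2 \<in> bicliques V E" "?N \<subseteq> {D1, D2}"
    using subset_doubleton_of_card_le_2[OF _ _ N_sub B] deg unfolding degree_def by blast
  show thesis
  proof (rule that[OF D(1,2)])
    fix S assume S: "S \<subseteq> V" "induces_complete_bipartite E S" "S \<inter> B \<noteq> {}" "\<not> S \<subseteq> B"
    obtain D where "D \<in> bicliques V E" "S \<subseteq> D"
      using complete_bipartite_subset_biclique[OF finV S(1,2)] by blast
    moreover from this have "KB_adj V E B D" unfolding KB_adj_def using B S(3,4) by blast
    ultimately show "S \<subseteq> D1 \<or> S \<subseteq> D2" using D(3) by blast
  qed
qed

subsection \<open>A biclique with at most two neighbours in KB(H)\<close>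

locale biclique_of_degree_le_2 =
  fixes V :: "'a set" and E :: "'a \<Rightarrow> 'a \<Rightarrow> bool" and B X Y D1 D2 :: "'a set"
  assumes simple: "simple_graph V E"
    and twin_free: "false_twin_free V E"
    and B_sub: "B \<subseteq> V"
    and XY_disj: "X \<inter> Y = {}" and XY_union: "X \<union> Y = B" and X_ne: "X \<noteq> {}" and Y_ne: "Y \<noteq> {}"
    and X_indep: "\<forall>x\<in>X. \<forall>x'\<in>X. \<not> E x x'" and Y_indep: "\<forall>y\<in>Y. \<forall>y'\<in>Y. \<not> E y y'"
    and XY_adj: "\<forall>x\<in>X. \<forall>y\<in>Y. E x y"
    and B_max: "\<forall>B'. B \<subseteq> B' \<and> B' \<subseteq> V \<and> induces_complete_bipartite E B' \<longrightarrow> B' = B"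
    and D_complete_bipartite: "induces_complete_bipartite E D1" "induces_complete_bipartite E D2"
    and cover: "\<And>S. S \<subseteq> V \<Longrightarrow> induces_complete_bipartite E S \<Longrightarrow> S \<inter> B \<noteq> {} \<Longrightarrow> \<not> S \<subseteq> B
      \<Longrightarrow> S \<subseteq> D1 \<or> S \<subseteq> D2"
begin

lemma adj_sym: "E x y \<Longrightarrow> E y x" using simple unfolding simple_graph_def by blast
lemma adj_commute: "E x y \<longleftrightarrow> E y x" using adj_sym by blast
lemma adj_irrefl: "\<not> E x x" using simple unfolding simple_graph_def by blast
lemma adj_fst_in_V: "E x y \<Longrightarrow> x \<in> V" using simple unfolding simple_graph_def by blast
lemma adj_snd_in_V: "E x y \<Longrightarrow> y \<in> V" using simple unfolding simple_graph_def by blast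
lemma finite_V: "finite V" using simple unfolding simple_graph_def by blast

lemma X_sub_B: "x \<in> X \<Longrightarrow> x \<in> B" and Y_sub_B: "y \<in> Y \<Longrightarrow> y \<in> B"
  using XY_union by blast+

lemma YX_adj: "x \<in> X \<Longrightarrow> y \<in> Y \<Longrightarrow> E y x" using XY_adj adj_sym by blast

lemma swap: "biclique_of_degree_le_2 V E B Y X D1 D2"
proof
  show "Y \<inter> X = {}" "Y \<union> X = B" using XY_disj XY_union by blast+
  show "\<forall>x\<in>Y. \<forall>y\<in>X. E x y" using YX_adj by blast
  show "\<And>S. S \<subseteq> V \<Longrightarrow> induces_complete_bipartite E S \<Longrightarrow> S \<inter> B \<noteq> {} \<Longrightarrow> \<not> S \<subseteq> B
      \<Longrightarrow> S \<subseteq> D1 \<or> S \<subseteq> D2" by (fact cover)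
qed (fact simple twin_free B_sub X_ne Y_ne X_indep Y_indep B_max D_complete_bipartite)+

lemma D_eq_one_of_distinct:
  "D \<in> {D1, D2} \<Longrightarrow> Da \<in> {D1, D2} \<Longrightarrow> Db \<in> {D1, D2} \<Longrightarrow> Da \<noteq> Db \<Longrightarrow> D = Da \<or> D = Db"
  by auto

lemma D_adj_parity:
  "D \<in> {D1, D2} \<Longrightarrow> p \<in> D \<Longrightarrow> q \<in> D \<Longrightarrow> r \<in> D \<Longrightarrow> E p r \<longleftrightarrow> (E p q \<longleftrightarrow> \<not> E q r)"
  using complete_bipartite_adj_parity[OF simple] D_complete_bipartite by blast

lemma D_adj_Y_const:
  assumes "D \<in> {D1, D2}" "w \<in> D" "y \<in> D" "y \<in> Y" "y' \<in> D" "y' \<in> Y"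
  shows "E w y' \<longleftrightarrow> E w y"
  using D_adj_parity[OF assms(1,2,3,5)] Y_indep assms(4,6) by blast

lemma star_covered:
  assumes "c \<notin> L" "L \<noteq> {}" "\<forall>l\<in>L. E c l" "\<forall>l\<in>L. \<forall>l'\<in>L. \<not> E l l'"
    "insert c L \<inter> B \<noteq> {}" "\<not> insert c L \<subseteq> B"
  shows "\<exists>D\<in>{D1, D2}. insert c L \<subseteq> D"
proof -
  have "induces_complete_bipartite E (insert c L)"
    using assms by (intro star_induces_complete_bipartite[OF simple]) auto
  moreover have "insert c L \<subseteq> V" using assms(2,3) adj_fst_in_V adj_snd_in_V by blast
  ultimately show ?thesis using cover[of "insert c L"] assms(5,6) by blast
qed

lemma edge_covered:
  assumes "E u w" "u \<in> B" "w \<notin> B"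
  shows "\<exists>D\<in>{D1, D2}. u \<in> D \<and> w \<in> D"
  using star_covered[of u "{w}"] assms adj_irrefl by auto

lemma cherry_covered:
  assumes "E c p" "E c q" "\<not> E p q" "p \<noteq> q"
    "c \<in> B \<or> p \<in> B \<or> q \<in> B" "c \<notin> B \<or> p \<notin> B \<or> q \<notin> B"
  shows "\<exists>D\<in>{D1, D2}. c \<in> D \<and> p \<in> D \<and> q \<in> D"
proof -
  have "c \<noteq> p" "c \<noteq> q" using assms(1,2) adj_irrefl by auto
  then show ?thesis
    using star_covered[of c "{p, q}"] assms adj_irrefl adj_commute by auto
qed

lemma Y_distinguished_outside_B:
  assumes "y1 \<in> Y" "y2 \<in> Y" "y1 \<noteq> y2"
  obtains r where "r \<in> V" "r \<notin> B" "E r y1 \<noteq> E r y2"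
proof -
  have "nbhd E y1 \<noteq> nbhd E y2"
    using twin_free assms B_sub XY_union unfolding false_twin_free_def by blast
  then obtain r where r: "E y1 r \<noteq> E y2 r" unfolding nbhd_def by blast
  then have "r \<notin> X" "r \<notin> Y" using XY_adj Y_indep assms(1,2) adj_commute by blast+
  then show thesis using that r adj_fst_in_V adj_snd_in_V XY_union adj_commute by blast
qed

lemma Y_separated_by_D:
  assumes "y1 \<in> Y" "y2 \<in> Y" "y1 \<noteq> y2"
  shows "\<exists>D\<in>{D1, D2}. (y1 \<in> D) \<noteq> (y2 \<in> D)"
proof -
  obtain r where r: "r \<in> V" "r \<notin> B" "E r y1 \<noteq> E r y2"
    using Y_distinguished_outside_B[OF assms] by blast
  have "\<not> E y1 y2" using Y_indep assms by blast
  show ?thesis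
  proof (cases "E r y1")
    case True
    then obtain D where "D \<in> {D1, D2}" "y1 \<in> D" "r \<in> D"
      using edge_covered[of y1 r] r(2) Y_sub_B[OF assms(1)] adj_commute by blast
    then show ?thesis using D_adj_parity[of D r y1 y2] True r(3) \<open>\<not> E y1 y2\<close> by blast
  next
    case False
    then obtain D where "D \<in> {D1, D2}" "y2 \<in> D" "r \<in> D"
      using edge_covered[of y2 r] r Y_sub_B[OF assms(2)] adj_commute by blast
    then show ?thesis using D_adj_parity[of D r y2 y1] False r(3) \<open>\<not> E y1 y2\<close> adj_commute by blast
  qed
qed

lemma D_trace_of_outside_nbhd:
  assumes "w \<notin> B" "y \<in> Y" "E w y"
  shows "\<exists>D\<in>{D1, D2}. w \<in> D \<and> (\<forall>y'\<in>Y. y' \<in> D \<longleftrightarrow> E w y')"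
proof -
  let ?L = "{y'\<in>Y. E w y'}"
  obtain D where D: "D \<in> {D1, D2}" "insert w ?L \<subseteq> D"
    using star_covered[of w ?L] assms Y_indep XY_union by blast
  have "y' \<in> D \<longleftrightarrow> E w y'" if "y' \<in> Y" for y'
    using D_adj_Y_const[OF D(1), of w y y'] D(2) assms that by blast
  then show ?thesis using D by blast
qed

lemma outside_dominating_Y_has_X_nbr:
  assumes w: "w \<in> V" "w \<notin> B" and dom: "\<forall>y\<in>Y. E w y"
  shows "\<exists>x\<in>X. E w x"
proof (rule ccontr)
  assume nx: "\<not> (\<exists>x\<in>X. E w x)"
  have "induces_complete_bipartite E (insert w B)" unfolding induces_complete_bipartite_def
  proof (intro exI conjI)
    show "insert w X \<noteq> {}" "Y \<noteq> {}" using Y_ne by auto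
    show "insert w X \<inter> Y = {}" "insert w X \<union> Y = insert w B" using XY_disj XY_union w by blast+
    show "\<forall>x\<in>insert w X. \<forall>x'\<in>insert w X. \<not> E x x'"
    proof (intro ballI)
      fix p q assume "p \<in> insert w X" "q \<in> insert w X"
      then show "\<not> E p q" using nx X_indep adj_irrefl adj_commute by (metis insert_iff)
    qed
    show "\<forall>y\<in>Y. \<forall>y'\<in>Y. \<not> E y y'" by (rule Y_indep)
    show "\<forall>x\<in>insert w X. \<forall>y\<in>Y. E x y" using XY_adj dom by blast
  qed
  moreover have "insert w B \<subseteq> V" using B_sub w by blast
  ultimately show False using B_max w by blast
qed

lemma X_pendant_star_covered:
  assumes w: "w \<notin> B" and x: "x \<in> X" "E w x" and no_Y: "\<forall>y\<in>Y. \<not> E w y"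
  shows "\<exists>D\<in>{D1, D2}. insert x (insert w Y) \<subseteq> D"
proof -
  have "x \<notin> insert w Y" using x(1) w XY_disj XY_union by blast
  moreover have "\<forall>l\<in>insert w Y. E x l" using adj_sym[OF x(2)] XY_adj x(1) by blast
  moreover have "\<forall>l\<in>insert w Y. \<forall>l'\<in>insert w Y. \<not> E l l'"
  proof (intro ballI)
    fix l l' assume "l \<in> insert w Y" "l' \<in> insert w Y"
    then show "\<not> E l l'" using no_Y Y_indep adj_irrefl adj_commute by (metis insert_iff)
  qed
  moreover have "insert x (insert w Y) \<inter> B \<noteq> {}" "\<not> insert x (insert w Y) \<subseteq> B"
    using X_sub_B[OF x(1)] w by blast+
  ultimately show ?thesis using star_covered[of x "insert w Y"] by blast
qed

end

subsection \<open>The claw case\<close>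

locale biclique_with_claw = biclique_of_degree_le_2 +
  fixes v a b c
  assumes centre: "v \<in> X" and leaves: "a \<in> Y" "b \<in> Y" "c \<in> Y" "a \<noteq> b" "a \<noteq> c" "b \<noteq> c"
begin

text \<open>Any two leaves are separated by D1 or D2, so the three leaves carry pairwise distinct
  membership patterns in (D1, D2); this rules out the two configurations below.\<close>
lemma leaves_not_in_one_D:
  assumes "D \<in> {D1, D2}" "a \<in> D" "b \<in> D" "c \<in> D"
  shows False
  using Y_separated_by_D[of a b] Y_separated_by_D[of a c] Y_separated_by_D[of b c] leaves assms
  by blast

lemma leaves_not_split_complementarily:
  assumes "D \<in> {D1, D2}" "D' \<in> {D1, D2}" "D \<noteq> D'" "\<forall>y\<in>{a, b, c}. y \<in> D \<longleftrightarrow> y \<notin> D'"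
  shows False
  using Y_separated_by_D[of a b] Y_separated_by_D[of a c] Y_separated_by_D[of b c] leaves assms
  by blast

lemma leaf_distinguishes_D: "\<exists>y\<in>{a, b, c}. (y \<in> D1) \<noteq> (y \<in> D2)"
  using Y_separated_by_D[of a b] Y_separated_by_D[of a c] Y_separated_by_D[of b c] leaves by blast

lemma X_has_no_outside_nbr:
  assumes w: "w \<notin> B" and x: "x \<in> X"
  shows "\<not> E w x"
proof
  assume wx: "E w x"
  then have xw: "E x w" by (rule adj_sym)
  show False
  proof (cases "\<exists>y\<in>Y. E w y")
    case False
    then obtain D where "D \<in> {D1, D2}" "insert x (insert w Y) \<subseteq> D"
      using X_pendant_star_covered[OF w x wx] by blast
    then show False using leaves_not_in_one_D leaves by blast
  next
    case True
    then obtain y0 where y0: "y0 \<in> Y" "E w y0" by blast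
    obtain Dw where Dw: "Dw \<in> {D1, D2}" "\<forall>y'\<in>Y. y' \<in> Dw \<longleftrightarrow> E w y'"
      using D_trace_of_outside_nbhd[OF w y0] by blast
    have "\<not> (E w a \<and> E w b \<and> E w c)" using leaves_not_in_one_D[OF Dw(1)] Dw(2) leaves by blast
    then obtain y1 where y1: "y1 \<in> Y" "\<not> E w y1" using leaves by blast
    \<comment> \<open>The Y-non-neighbours of w lie in the bicliques of the cherries x w y, and there is
      only one such biclique besides Dw.\<close>
    have cherry: "\<exists>D\<in>{D1, D2}. x \<in> D \<and> w \<in> D \<and> y \<in> D" if y: "y \<in> Y" "\<not> E w y" for y
    proof -
      have "E x y" "w \<noteq> y" using XY_adj x y w Y_sub_B by blast+
      then show ?thesis using cherry_covered[of x w y] xw y(2) w X_sub_B[OF x] by blast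
    qed
    obtain D' where D': "D' \<in> {D1, D2}" "w \<in> D'" "y1 \<in> D'" using cherry[OF y1] by blast
    have D'_ne: "D' \<noteq> Dw" using D'(3) Dw(2) y1 by blast
    have "y \<in> D' \<longleftrightarrow> \<not> E w y" if y: "y \<in> Y" for y
    proof (cases "E w y")
      case True
      then show ?thesis using D_adj_Y_const[OF D'(1,2,3) y1(1) _ y] y1 by blast
    next
      case False
      then obtain D'' where "D'' \<in> {D1, D2}" "y \<in> D''" using cherry[OF y] by blast
      then show ?thesis using False Dw D' D'_ne y by blast
    qed
    then show False
      using leaves_not_split_complementarily[OF Dw(1) D'(1) D'_ne[symmetric]] Dw(2) leaves by blast
  qed
qed

lemma X_not_adj_outside: "w \<notin> B \<Longrightarrow> x \<in> X \<Longrightarrow> \<not> E x w"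
  using X_has_no_outside_nbr adj_sym by blast

lemma no_outside_edge_dominating_Y_trace:
  assumes w: "w \<notin> B" and z: "z \<notin> B" and wz: "E w z"
    and dom: "\<forall>y\<in>Y. y \<in> D1 \<or> y \<in> D2 \<longrightarrow> E w y"
  shows False
proof -
  obtain y1 where y1: "y1 \<in> Y" "(y1 \<in> D1) \<noteq> (y1 \<in> D2)"
    using leaf_distinguishes_D leaves by blast
  have wy1: "E w y1" using dom y1 by blast
  have y1w: "E y1 w" using adj_sym[OF wy1] .
  have y1v: "E y1 v" using YX_adj centre y1 by blast
  have nv: "\<not> E v w" "\<not> E v z" using X_not_adj_outside centre w z by blast+
  have "v \<noteq> w" "v \<noteq> z" "y1 \<noteq> z" using X_sub_B[OF centre] Y_sub_B[OF y1(1)] w z by auto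
  obtain DA where DA: "DA \<in> {D1, D2}" "y1 \<in> DA" "v \<in> DA" "w \<in> DA"
    using cherry_covered[of y1 v w] y1v y1w nv \<open>v \<noteq> w\<close> X_sub_B[OF centre] w by blast
  show False
  proof (cases "E y1 z")
    case False
    obtain DB where DB: "DB \<in> {D1, D2}" "w \<in> DB" "y1 \<in> DB" "z \<in> DB"
      using cherry_covered[of w y1 z] wy1 wz w Y_sub_B[OF y1(1)] False \<open>y1 \<noteq> z\<close> by blast
    have "DA \<noteq> DB" using D_adj_parity[OF DA(1,3,4), of z] DB(4) nv wz by blast
    then show False using DA(1,2) DB(1,3) y1(2) by blast
  next
    case True
    obtain DC where DC: "DC \<in> {D1, D2}" "y1 \<in> DC" "v \<in> DC" "z \<in> DC"
      using cherry_covered[of y1 v z] y1v True nv \<open>v \<noteq> z\<close> X_sub_B[OF centre] z by blast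
    have "DA = DC" using DA(1,2) DC(1,2) y1(2) by blast
    then show False using D_adj_parity[OF DA(1,4,2), of z] DC(4) wz wy1 True by blast
  qed
qed

lemma no_outside_edge_with_private_Y_nbr:
  assumes w: "w \<notin> B" and z: "z \<notin> B" and wz: "E w z" and y: "y \<in> Y" "E w y" "\<not> E z y"
  shows False
proof -
  have nv: "\<not> E v w" "\<not> E v z" using X_not_adj_outside centre w z by blast+
  have "v \<noteq> w" "y \<noteq> z" using X_sub_B[OF centre] Y_sub_B[OF y(1)] w z by auto
  have yw: "E y w" "\<not> E y z" using adj_sym y(2,3) by blast+
  obtain DA where DA: "DA \<in> {D1, D2}" "y \<in> DA" "v \<in> DA" "w \<in> DA"
    using cherry_covered[of y v w] YX_adj[OF centre y(1)] yw nv \<open>v \<noteq> w\<close> X_sub_B[OF centre] w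
    by blast
  obtain DB where DB: "DB \<in> {D1, D2}" "w \<in> DB" "y \<in> DB" "z \<in> DB"
    using cherry_covered[of w y z] y(2) wz yw(2) \<open>y \<noteq> z\<close> w Y_sub_B[OF y(1)] by blast
  have "DA \<noteq> DB" using D_adj_parity[OF DA(1,3,4), of z] DB(4) nv wz by blast
  then have "y' \<in> DA \<or> y' \<in> DB" if "y' \<in> D1 \<or> y' \<in> D2" for y'
    using that DA(1) DB(1) by blast
  then have "\<forall>y'\<in>Y. y' \<in> D1 \<or> y' \<in> D2 \<longrightarrow> E w y'"
    using D_adj_Y_const[OF DA(1,4,2) y(1)] D_adj_Y_const[OF DB(1,2,3) y(1)] y(2) by blast
  then show False using no_outside_edge_dominating_Y_trace[OF w z wz] by blast
qed

lemma no_outside_edge_at_Y_nbr: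
  assumes w: "w \<notin> B" and z: "z \<notin> B" and wz: "E w z" and y: "y \<in> Y" "E w y"
  shows False
proof -
  have zw: "E z w" using adj_sym[OF wz] .
  have same: "E w y' \<longleftrightarrow> E z y'" if "y' \<in> Y" for y'
    using no_outside_edge_with_private_Y_nbr[OF w z wz that] no_outside_edge_with_private_Y_nbr[OF z w zw that]
    by blast
  have nv: "\<not> E v w" "\<not> E v z" using X_not_adj_outside centre w z by blast+
  have "v \<noteq> w" "v \<noteq> z" using X_sub_B[OF centre] w z by auto
  have yw: "E y w" "E y z" using adj_sym y(2) same[OF y(1)] by blast+
  obtain DA where DA: "DA \<in> {D1, D2}" "y \<in> DA" "v \<in> DA" "w \<in> DA"
    using cherry_covered[of y v w] YX_adj[OF centre y(1)] yw(1) nv \<open>v \<noteq> w\<close> X_sub_B[OF centre] w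
    by blast
  obtain DC where DC: "DC \<in> {D1, D2}" "y \<in> DC" "v \<in> DC" "z \<in> DC"
    using cherry_covered[of y v z] YX_adj[OF centre y(1)] yw(2) nv \<open>v \<noteq> z\<close> X_sub_B[OF centre] z
    by blast
  have "DA \<noteq> DC" using D_adj_parity[OF DA(1,4,2), of z] DC(4) wz y(2) yw(2) by blast
  then have "y' \<in> DA \<or> y' \<in> DC" if "y' \<in> D1 \<or> y' \<in> D2" for y'
    using that DA(1) DC(1) by blast
  moreover have "E w y'" if "y' \<in> Y" "y' \<in> DA" for y'
    using D_adj_Y_const[OF DA(1,4,2) y(1) that(2,1)] y(2) by blast
  moreover have "E w y'" if "y' \<in> Y" "y' \<in> DC" for y'
    using D_adj_Y_const[OF DC(1,4,2) y(1) that(2,1)] same[OF y(1)] same[OF that(1)] y(2) by blast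
  ultimately have "\<forall>y'\<in>Y. y' \<in> D1 \<or> y' \<in> D2 \<longrightarrow> E w y'" by blast
  then show False using no_outside_edge_dominating_Y_trace[OF w z wz] by blast
qed

lemma no_crossing_outside_pair:
  assumes w1: "w1 \<notin> B" and w2: "w2 \<notin> B"
    and y11: "y11 \<in> Y" "E w1 y11" "E w2 y11"
    and y10: "y10 \<in> Y" "E w1 y10" "\<not> E w2 y10"
    and y01: "y01 \<in> Y" "E w2 y01" "\<not> E w1 y01"
  shows False
proof -
  have "\<not> E w1 w2" using no_outside_edge_at_Y_nbr[OF w1 w2 _ y11(1,2)] by blast
  moreover have "w1 \<noteq> w2" "E y11 w1" "E y11 w2" using y10 y11 adj_sym by blast+
  ultimately obtain D where D: "D \<in> {D1, D2}" "y11 \<in> D" "w1 \<in> D" "w2 \<in> D"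
    using cherry_covered[of y11 w1 w2] Y_sub_B[OF y11(1)] w1 by blast
  obtain Da where Da: "Da \<in> {D1, D2}" "\<forall>y'\<in>Y. y' \<in> Da \<longleftrightarrow> E w1 y'"
    using D_trace_of_outside_nbhd[OF w1 y11(1,2)] by blast
  obtain Db where Db: "Db \<in> {D1, D2}" "\<forall>y'\<in>Y. y' \<in> Db \<longleftrightarrow> E w2 y'"
    using D_trace_of_outside_nbhd[OF w2 y11(1,3)] by blast
  have "Da \<noteq> Db" using Da(2) Db(2) y10 by blast
  then have "D = Da \<or> D = Db" using D(1) Da(1) Db(1) by blast
  then show False
  proof
    assume "D = Da"
    then show False using D_adj_Y_const[OF D(1,4,2) y11(1) _ y10(1)] Da(2) y10 y11 by blast
  next
    assume "D = Db"
    then show False using D_adj_Y_const[OF D(1,3,2) y11(1) _ y01(1)] Db(2) y01 y11 by blast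
  qed
qed

lemma outside_vertex_has_Y_nbr:
  assumes conn: "connected_graph V E" and w: "w \<in> V" "w \<notin> B"
  shows "\<exists>y\<in>Y. E w y"
proof -
  let ?U = "B \<union> {w. \<exists>y\<in>Y. E w y}"
  have "t \<in> ?U" if s: "s \<in> ?U" and st: "E s t" for s t
  proof (cases "t \<in> B")
    case False
    have "s \<notin> X" using X_has_no_outside_nbr[OF False] st adj_commute by blast
    then have "s \<in> Y \<or> (s \<notin> B \<and> (\<exists>y\<in>Y. E s y))" using s XY_union by blast
    then show ?thesis using no_outside_edge_at_Y_nbr[OF _ False st] st adj_commute by blast
  qed blast
  then have "V \<subseteq> ?U"
    using connected_graph_closed_superset[OF conn, of v] X_sub_B[OF centre] B_sub by blast
  then show ?thesis using w by blast
qed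

lemma nbhd_outside_vertex:
  assumes conn: "connected_graph V E" and w: "w \<in> V" "w \<notin> B"
  shows "nbhd E w = {y\<in>Y. E w y}"
proof -
  obtain y where "y \<in> Y" "E w y" using outside_vertex_has_Y_nbr[OF conn w] by blast
  then have "u \<in> B" "u \<notin> X" if "E w u" for u
    using no_outside_edge_at_Y_nbr[OF w(2), of u] X_has_no_outside_nbr[OF w(2)] that by blast+
  then show ?thesis unfolding nbhd_def using XY_union by blast
qed

lemma X_eq_centre: "X = {v}"
proof -
  have nbhd_X: "nbhd E x = Y" if "x \<in> X" for x
    using that X_has_no_outside_nbr X_indep XY_adj XY_union adj_commute unfolding nbhd_def by blast
  have "x = v" if "x \<in> X" for x
    using twin_free that centre nbhd_X B_sub X_sub_B unfolding false_twin_free_def by blast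
  then show ?thesis using centre by blast
qed

lemma card_outside_le_2:
  assumes conn: "connected_graph V E"
  shows "card (V - B) \<le> 2"
proof -
  have "inj_on (nbhd E) (V - B)"
    using twin_free unfolding false_twin_free_def by (intro inj_onI) blast
  moreover have "nbhd E ` (V - B) \<subseteq> {D1 \<inter> Y, D2 \<inter> Y}"
  proof
    fix S assume "S \<in> nbhd E ` (V - B)"
    then obtain w where w: "w \<in> V" "w \<notin> B" "S = nbhd E w" by blast
    obtain y where "y \<in> Y" "E w y" using outside_vertex_has_Y_nbr[OF conn w(1,2)] by blast
    then obtain D where "D \<in> {D1, D2}" "\<forall>y'\<in>Y. y' \<in> D \<longleftrightarrow> E w y'"
      using D_trace_of_outside_nbhd[OF w(2)] by blast
    then show "S \<in> {D1 \<inter> Y, D2 \<inter> Y}" using w nbhd_outside_vertex[OF conn w(1,2)] by blast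
  qed
  ultimately have "card (V - B) \<le> card {D1 \<inter> Y, D2 \<inter> Y}" by (rule card_inj_on_le) simp
  also have "\<dots> \<le> 2" by (rule card_insert_le_m1) auto
  finally show ?thesis .
qed

lemma inj_on_Y_outside_nbhd: "inj_on (\<lambda>y. nbhd E y - B) Y"
proof (rule inj_onI)
  fix y y' assume yy: "y \<in> Y" "y' \<in> Y" "nbhd E y - B = nbhd E y' - B"
  have "nbhd E u \<inter> B = X" if "u \<in> Y" for u
    using that XY_adj Y_indep XY_union adj_commute unfolding nbhd_def by blast
  then have "nbhd E y = nbhd E y'" using yy by blast
  then show "y = y'" using twin_free yy B_sub Y_sub_B unfolding false_twin_free_def by blast
qed

lemma outside_nbhds_of_Y_exhaust_Pow:
  assumes conn: "connected_graph V E" and large: "7 \<le> card V"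
  shows "card (V - B) = 2" "(\<lambda>y. nbhd E y - B) ` Y = Pow (V - B)"
proof -
  let ?W = "V - B" and ?g = "\<lambda>y. nbhd E y - B"
  have fin: "finite ?W" "finite Y" using finite_V B_sub XY_union by (auto intro: finite_subset)
  have g_Pow: "?g ` Y \<subseteq> Pow ?W" unfolding nbhd_def using adj_snd_in_V by blast
  have cY: "card Y \<le> 2 ^ card ?W"
    using card_inj_on_le[OF inj_on_Y_outside_nbhd g_Pow] card_Pow[of ?W] fin by simp
  have "card V = card B + card ?W"
    using card_Un_disjoint[of B ?W] fin finite_V B_sub by (simp add: Un_absorb1 finite_subset)
  moreover have "card B = 1 + card Y"
  proof -
    have "B = insert v Y" "v \<notin> Y" using XY_union XY_disj X_eq_centre by auto
    then show ?thesis using fin(2) by simp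
  qed
  ultimately have cV: "card V = 1 + card Y + card ?W" by simp
  have cW: "card ?W \<le> 2" by (rule card_outside_le_2[OF conn])
  show "card ?W = 2"
  proof (rule ccontr)
    assume "card ?W \<noteq> 2"
    then have "card ?W = 0 \<or> card ?W = 1" using cW by linarith
    then have "(2::nat) ^ card ?W \<le> 2" by auto
    then show False using cV large cY cW by simp
  qed
  then have "card Y = 4" using cV large cY by simp
  then have "card (?g ` Y) = card (Pow ?W)"
    using card_image[OF inj_on_Y_outside_nbhd] card_Pow[of ?W] fin(1) \<open>card ?W = 2\<close> by simp
  then show "?g ` Y = Pow ?W" by (rule card_subset_eq[OF _ g_Pow, rotated]) (simp add: fin(1))
qed

lemma claw_excluded:
  assumes conn: "connected_graph V E" and large: "7 \<le> card V"
  shows False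
proof -
  obtain w1 w2 where W: "V - B = {w1, w2}" "w1 \<noteq> w2"
    using outside_nbhds_of_Y_exhaust_Pow(1)[OF conn large] card_2_iff by metis
  then have w_out: "w1 \<notin> B" "w2 \<notin> B" by blast+
  have realised: "\<exists>y\<in>Y. nbhd E y - B = S" if "S \<subseteq> {w1, w2}" for S
  proof -
    have "S \<in> (\<lambda>y. nbhd E y - B) ` Y"
      using that outside_nbhds_of_Y_exhaust_Pow(2)[OF conn large] W(1) by simp
    then show ?thesis by force
  qed
  have sub: "{w1, w2} \<subseteq> {w1, w2}" "{w1} \<subseteq> {w1, w2}" "{w2} \<subseteq> {w1, w2}" by auto
  obtain y11 where y11: "y11 \<in> Y" "nbhd E y11 - B = {w1, w2}" using realised[OF sub(1)] by blast
  obtain y10 where y10: "y10 \<in> Y" "nbhd E y10 - B = {w1}" using realised[OF sub(2)] by blast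
  obtain y01 where y01: "y01 \<in> Y" "nbhd E y01 - B = {w2}" using realised[OF sub(3)] by blast
  have adj_iff: "E w y \<longleftrightarrow> w \<in> nbhd E y - B" if "w \<notin> B" for w y
    using that adj_commute unfolding nbhd_def by simp
  have "E w1 y11" "E w2 y11" using adj_iff[OF w_out(1), of y11] adj_iff[OF w_out(2), of y11]
    unfolding y11(2) by simp_all
  moreover have "E w1 y10" "\<not> E w2 y10" using adj_iff[OF w_out(1), of y10] adj_iff[OF w_out(2), of y10]
    unfolding y10(2) using W(2) by simp_all
  moreover have "E w2 y01" "\<not> E w1 y01" using adj_iff[OF w_out(2), of y01] adj_iff[OF w_out(1), of y01]
    unfolding y01(2) using W(2) by simp_all
  ultimately show False using no_crossing_outside_pair[OF w_out] y11(1) y10(1) y01(1) by blast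
qed

end

subsection \<open>The C4 case\<close>

locale biclique_is_C4 = biclique_of_degree_le_2 +
  fixes x1 x2 y1 y2
  assumes X_eq: "X = {x1, x2}" and Y_eq: "Y = {y1, y2}" and x_ne: "x1 \<noteq> x2" and y_ne: "y1 \<noteq> y2"
begin

lemma C4_swap: "biclique_is_C4 V E B Y X D1 D2 y1 y2 x1 x2"
  using swap X_eq Y_eq x_ne y_ne by (simp add: biclique_is_C4_def biclique_is_C4_axioms_def)

lemma other_in_X: "x \<in> X \<Longrightarrow> \<exists>x'\<in>X. x' \<noteq> x" using X_eq x_ne by (cases "x = x1") auto
lemma other_in_Y: "y \<in> Y \<Longrightarrow> \<exists>y'\<in>Y. y' \<noteq> y" using Y_eq y_ne by (cases "y = y1") auto

lemma y_in_Y: "y1 \<in> Y" "y2 \<in> Y" using Y_eq by blast+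

lemma Y_split_by_D: "\<exists>D\<in>{D1, D2}. (y1 \<in> D) \<noteq> (y2 \<in> D)"
  using Y_separated_by_D[of y1 y2] Y_eq y_ne by blast

lemma outside_at_most_one_Y_nbr:
  assumes w: "w \<notin> B" and y: "y \<in> Y" "y' \<in> Y" "E w y" "E w y'"
  shows "y = y'"
proof (rule ccontr)
  assume yy: "y \<noteq> y'"
  then have Y_yy: "Y = {y, y'}" using Y_eq y(1,2) by blast
  obtain x where x: "x \<in> X" "E w x"
    using outside_dominating_Y_has_X_nbr[of w] adj_fst_in_V[OF y(3)] w y(3,4) Y_yy by blast
  obtain Dm where Dm: "Dm \<in> {D1, D2}" "x \<in> Dm" "w \<in> Dm"
    using edge_covered[of x w] adj_sym[OF x(2)] X_sub_B[OF x(1)] w by blast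
  have not_in_Dm: "z \<notin> Dm" if "z \<in> Y" "E w z" for z
    using D_adj_parity[OF Dm(1,3,2), of z] that x XY_adj by blast
  have y12: "y1 \<in> {y, y'}" "y2 \<in> {y, y'}" using Y_yy Y_eq by auto
  have "y1 \<notin> Dm" "y2 \<notin> Dm" using not_in_Dm[of y] not_in_Dm[of y'] y y12 by auto
  moreover obtain Dk where Dk: "Dk \<in> {D1, D2}" "y \<in> Dk" "y' \<in> Dk"
    using cherry_covered[of w y y'] y yy Y_indep Y_sub_B[OF y(1)] w by blast
  moreover have "y1 \<in> Dk" "y2 \<in> Dk" using y12 Dk by auto
  ultimately show False using Y_split_by_D Dm(1) by blast
qed

lemma outside_at_most_one_X_nbr:
  assumes "w \<notin> B" "x \<in> X" "x' \<in> X" "E w x" "E w x'"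
  shows "x = x'"
proof -
  interpret swapped: biclique_is_C4 V E B Y X D1 D2 y1 y2 x1 x2 by (rule C4_swap)
  show ?thesis using swapped.outside_at_most_one_Y_nbr[OF assms] .
qed

lemma other_X_not_in_D:
  assumes w: "w \<notin> B" "x \<in> X" "E w x" and D: "D \<in> {D1, D2}" "x \<in> D" "w \<in> D"
    and x': "x' \<in> X" "x' \<noteq> x"
  shows "x' \<notin> D"
proof
  assume "x' \<in> D"
  moreover have "\<not> E x' x" "\<not> E x' w" "E x w"
    using X_indep w(2) x' outside_at_most_one_X_nbr[OF w(1,2) x'(1) w(3)] adj_sym w(3) by blast+
  ultimately show False using D_adj_parity[OF D(1) _ D(2,3), of x'] by blast
qed

lemma X_in_D: "x \<in> X \<Longrightarrow> x \<in> D1 \<or> x \<in> D2"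
proof -
  assume x: "x \<in> X"
  obtain r where r: "r \<in> V" "r \<notin> B" "E r y1 \<noteq> E r y2"
    using Y_distinguished_outside_B[of y1 y2] Y_eq y_ne by blast
  then obtain y where y: "y \<in> Y" "E r y" using Y_eq by blast
  show ?thesis
  proof (cases "E x r")
    case True
    then show ?thesis using edge_covered[of x r] X_sub_B[OF x] r(2) by blast
  next
    case False
    have "x \<noteq> r" using X_sub_B[OF x] r(2) by blast
    then show ?thesis
      using cherry_covered[of y x r] YX_adj[OF x y(1)] adj_sym[OF y(2)] False Y_sub_B[OF y(1)] r(2)
      by blast
  qed
qed

lemma outside_nbr_of_X_attached_has_B_nbr:
  assumes w: "w \<notin> B" and u: "u \<in> X" "E w u" and z: "z \<notin> B" "E w z"
  shows "\<exists>b\<in>B. E z b"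
proof (rule ccontr)
  assume nz: "\<not> (\<exists>b\<in>B. E z b)"
  obtain u' where u': "u' \<in> X" "u' \<noteq> u" using other_in_X[OF u(1)] by blast
  have nuz: "\<not> E u z" using nz X_sub_B[OF u(1)] adj_sym by blast
  have "u \<noteq> z" using X_sub_B[OF u(1)] z(1) by blast
  then obtain Di where Di: "Di \<in> {D1, D2}" "w \<in> Di" "u \<in> Di" "z \<in> Di"
    using cherry_covered[of w u z] u(2) z(2) nuz X_sub_B[OF u(1)] w by blast
  obtain q where q: "q \<in> Y" "\<not> E w q"
    using outside_at_most_one_Y_nbr[OF w, of y1 y2] Y_eq y_ne by blast
  have "q \<noteq> w" "\<not> E q w" using q w Y_sub_B adj_sym by blast+
  then obtain Dj where Dj: "Dj \<in> {D1, D2}" "u \<in> Dj" "q \<in> Dj" "w \<in> Dj"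
    using cherry_covered[of u q w] XY_adj u(1) q(1) adj_sym[OF u(2)] X_sub_B[OF u(1)] w by blast
  have "q \<notin> Di"
  proof
    assume "q \<in> Di"
    then have "E q z \<longleftrightarrow> (E q u \<longleftrightarrow> \<not> E u z)" using D_adj_parity[OF Di(1) _ Di(3,4)] by blast
    moreover have "\<not> E q z" using nz Y_sub_B[OF q(1)] adj_sym by blast
    ultimately show False using YX_adj[OF u(1) q(1)] nuz by blast
  qed
  then have "Di \<noteq> Dj" using Dj by blast
  moreover have "u' \<notin> Di" "u' \<notin> Dj"
    using other_X_not_in_D[OF w u(1,2) _ _ _ u'] Di Dj by blast+
  ultimately show False using X_in_D[OF u'(1)] Di(1) Dj(1) by blast
qed

text \<open>An outside vertex is attached if it has a neighbour in B; it is then a corner (one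
  neighbour on each side), an X-pendant (a single neighbour, in X) or a Y-pendant.\<close>
lemma X_pendant_D:
  assumes w: "w \<notin> B" "x \<in> X" "E w x" "\<forall>y\<in>Y. \<not> E w y"
  shows "\<exists>D\<in>{D1, D2}. x \<in> D \<and> w \<in> D \<and> Y \<subseteq> D \<and> (\<forall>x'\<in>X. x' \<noteq> x \<longrightarrow> x' \<notin> D)"
proof -
  obtain D where D: "D \<in> {D1, D2}" "insert x (insert w Y) \<subseteq> D"
    using X_pendant_star_covered[OF w] by blast
  then show ?thesis using other_X_not_in_D[OF w(1-3) D(1)] by blast
qed

lemma corner_D:
  assumes w: "w \<notin> B" and x: "x \<in> X" "E w x" and y: "y \<in> Y" "E w y"
  shows "\<exists>D\<in>{D1, D2}. x \<in> D \<and> w \<in> D \<and> y \<notin> D \<and>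
     (\<forall>y'\<in>Y. y' \<noteq> y \<longrightarrow> y' \<in> D) \<and> (\<forall>x'\<in>X. x' \<noteq> x \<longrightarrow> x' \<notin> D)"
proof -
  obtain y' where y': "y' \<in> Y" "y' \<noteq> y" using other_in_Y[OF y(1)] by blast
  have "\<not> E y' w" "y' \<noteq> w"
    using outside_at_most_one_Y_nbr[OF w y(1) y'(1) y(2)] y' w Y_sub_B adj_sym by blast+
  then obtain D where D: "D \<in> {D1, D2}" "x \<in> D" "y' \<in> D" "w \<in> D"
    using cherry_covered[of x y' w] XY_adj x(1) y'(1) adj_sym[OF x(2)] X_sub_B[OF x(1)] w by blast
  have "y \<notin> D" using D_adj_parity[OF D(1,4,2), of y] XY_adj x y by blast
  moreover have "\<forall>y''\<in>Y. y'' \<noteq> y \<longrightarrow> y'' \<in> D" using Y_eq y(1) y' D(3) by blast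
  ultimately show ?thesis using D other_X_not_in_D[OF w x D(1,2,4)] by blast
qed

lemma corner_D_other_side:
  assumes w: "w \<notin> B" and x: "x \<in> X" "E w x" and y: "y \<in> Y" "E w y"
  shows "\<exists>D\<in>{D1, D2}. y \<in> D \<and> w \<in> D \<and> x \<notin> D \<and>
     (\<forall>x'\<in>X. x' \<noteq> x \<longrightarrow> x' \<in> D) \<and> (\<forall>y'\<in>Y. y' \<noteq> y \<longrightarrow> y' \<notin> D)"
proof -
  interpret swapped: biclique_is_C4 V E B Y X D1 D2 y1 y2 x1 x2 by (rule C4_swap)
  show ?thesis using swapped.corner_D[OF w y x] .
qed

lemma X_pendants_share_attachment:
  assumes w: "w \<notin> B" "x \<in> X" "E w x" "\<forall>y\<in>Y. \<not> E w y"
    and z: "z \<notin> B" "x' \<in> X" "E z x'" "\<forall>y\<in>Y. \<not> E z y"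
  shows "x = x'"
proof (rule ccontr)
  assume "x \<noteq> x'"
  obtain Dw where Dw: "Dw \<in> {D1, D2}" "Y \<subseteq> Dw" "\<forall>u\<in>X. u \<noteq> x \<longrightarrow> u \<notin> Dw"
    using X_pendant_D[OF w] by blast
  have "x' \<notin> Dw" using Dw(3) z(2) \<open>x \<noteq> x'\<close> by auto
  moreover obtain Dz where "Dz \<in> {D1, D2}" "Y \<subseteq> Dz" "x' \<in> Dz" using X_pendant_D[OF z] by blast
  ultimately show False using Y_split_by_D y_in_Y Dw(1,2) by blast
qed

lemma X_pendants_at_same_vertex_nonadjacent:
  assumes w: "w \<notin> B" "x \<in> X" "E w x" "\<forall>y\<in>Y. \<not> E w y"
    and z: "z \<notin> B" "E z x" "\<forall>y\<in>Y. \<not> E z y"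
  shows "\<not> E w z"
proof
  assume wz: "E w z"
  obtain Dw where Dw: "Dw \<in> {D1, D2}" "x \<in> Dw" "w \<in> Dw" "Y \<subseteq> Dw" using X_pendant_D[OF w] by blast
  obtain Dz where Dz: "Dz \<in> {D1, D2}" "Y \<subseteq> Dz" "z \<in> Dz" using X_pendant_D[OF z(1) w(2) z(2,3)] by blast
  have "z \<notin> Dw" using D_adj_parity[OF Dw(1,3,2), of z] wz w(3) adj_sym[OF z(2)] by blast
  then have "Dw \<noteq> Dz" using Dz(3) by blast
  then show False using Y_split_by_D y_in_Y Dw(1,4) Dz(1,2) by blast
qed

lemma X_pendant_Y_pendant_nonadjacent:
  assumes w: "w \<notin> B" "x \<in> X" "E w x" "\<forall>y\<in>Y. \<not> E w y"
    and z: "z \<notin> B" "y \<in> Y" "E z y" "\<forall>x\<in>X. \<not> E z x"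
  shows "\<not> E w z"
proof
  assume wz: "E w z"
  interpret swapped: biclique_is_C4 V E B Y X D1 D2 y1 y2 x1 x2 by (rule C4_swap)
  obtain Dw where Dw: "Dw \<in> {D1, D2}" "x \<in> Dw" "w \<in> Dw" "Y \<subseteq> Dw" "\<forall>u\<in>X. u \<noteq> x \<longrightarrow> u \<notin> Dw"
    using X_pendant_D[OF w] by blast
  obtain Dz where Dz: "Dz \<in> {D1, D2}" "X \<subseteq> Dz"
    using swapped.X_pendant_D[OF z] by blast
  obtain x' where x': "x' \<in> X" "x' \<noteq> x" using other_in_X[OF w(2)] by blast
  obtain y' where y': "y' \<in> Y" "y' \<noteq> y" using other_in_Y[OF z(2)] by blast
  have "Dw \<noteq> Dz" using Dw(5) Dz(2) x' by blast
  have "x \<noteq> z" "\<not> E x z" using w(2) z(1,4) X_sub_B adj_sym by blast+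
  then obtain D where D: "D \<in> {D1, D2}" "w \<in> D" "x \<in> D" "z \<in> D"
    using cherry_covered[of w x z] w(3) wz X_sub_B[OF w(2)] w(1) by blast
  have "D = Dw \<or> D = Dz" using D_eq_one_of_distinct[OF D(1) Dw(1) Dz(1) \<open>Dw \<noteq> Dz\<close>] .
  then show False
  proof
    assume "D = Dw"
    then have "E z y'" using D_adj_parity[OF D(1,4,2), of y'] Dw(4) adj_sym[OF wz] w(4) y'(1) by blast
    then show False using outside_at_most_one_Y_nbr[OF z(1,2) y'(1) z(3)] y'(2) by blast
  next
    assume "D = Dz"
    then show False using other_X_not_in_D[OF w(1-3) D(1,3,2) x'] Dz(2) x'(1) by blast
  qed
qed

lemma X_pendant_excludes_corner:
  assumes w: "w \<notin> B" "x \<in> X" "E w x" "\<forall>y\<in>Y. \<not> E w y"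
    and z: "z \<notin> B" "s \<in> X" "E z s" "t \<in> Y" "E z t"
  shows False
proof -
  obtain Dw where Dw: "Dw \<in> {D1, D2}" "Y \<subseteq> Dw" using X_pendant_D[OF w] by blast
  obtain Da where Da: "Da \<in> {D1, D2}" "s \<in> Da" "t \<notin> Da"
    using corner_D[OF z(1) z(2,3) z(4,5)] by blast
  obtain Db where Db: "Db \<in> {D1, D2}" "s \<notin> Db" "\<forall>y'\<in>Y. y' \<noteq> t \<longrightarrow> y' \<notin> Db"
    using corner_D_other_side[OF z(1) z(2,3) z(4,5)] by blast
  obtain t' where t': "t' \<in> Y" "t' \<noteq> t" using other_in_Y[OF z(4)] by blast
  have "Da \<noteq> Db" using Da(2) Db(2) by blast
  moreover have "Dw \<noteq> Da" using Dw(2) Da(3) z(4) by blast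
  moreover have "Dw \<noteq> Db" using Dw(2) Db(3) t' by blast
  ultimately show False using D_eq_one_of_distinct[OF Dw(1) Da(1) Db(1)] by blast
qed

lemma corners_equal_or_opposite:
  assumes w: "w \<notin> B" "x \<in> X" "E w x" "y \<in> Y" "E w y"
    and z: "z \<notin> B" "s \<in> X" "E z s" "t \<in> Y" "E z t"
  shows "(s = x \<and> t = y) \<or> (s \<noteq> x \<and> t \<noteq> y)"
proof -
  obtain Da where Da: "Da \<in> {D1, D2}" "x \<in> Da"
      "\<forall>y'\<in>Y. y' \<noteq> y \<longrightarrow> y' \<in> Da" "\<forall>x'\<in>X. x' \<noteq> x \<longrightarrow> x' \<notin> Da"
    using corner_D[OF w(1) w(2,3) w(4,5)] by blast
  obtain Db where Db: "Db \<in> {D1, D2}" "x \<notin> Db" "y \<in> Db"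
    using corner_D_other_side[OF w(1) w(2,3) w(4,5)] by blast
  obtain Dz where Dz: "Dz \<in> {D1, D2}" "s \<in> Dz" "t \<notin> Dz"
    using corner_D[OF z(1) z(2,3) z(4,5)] by blast
  have "Da \<noteq> Db" using Da(2) Db(2) by blast
  then have "Dz = Da \<or> Dz = Db" using D_eq_one_of_distinct[OF Dz(1) Da(1) Db(1)] by blast
  then show ?thesis
  proof
    assume "Dz = Da"
    then show ?thesis using Da(3,4) Dz z(2,4) by auto
  next
    assume "Dz = Db"
    then show ?thesis using Db(2,3) Dz by auto
  qed
qed

lemma corners_at_same_place_nonadjacent:
  assumes w: "w \<notin> B" "x \<in> X" "E w x" "y \<in> Y" "E w y"
    and z: "z \<notin> B" "E z x" "E z y"
  shows "\<not> E w z"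
proof
  assume wz: "E w z"
  obtain Da where Da: "Da \<in> {D1, D2}" "x \<in> Da" "w \<in> Da"
    using corner_D[OF w(1) w(2,3) w(4,5)] by blast
  obtain Db where Db: "Db \<in> {D1, D2}" "x \<notin> Db"
    using corner_D_other_side[OF w(1) w(2,3) w(4,5)] by blast
  obtain Dz where Dz: "Dz \<in> {D1, D2}" "x \<in> Dz" "z \<in> Dz"
    using corner_D[OF z(1) w(2) z(2) w(4) z(3)] by blast
  have "Da \<noteq> Db" "Dz \<noteq> Db" using Da(2) Db(2) Dz(2) by blast+
  then have "Dz = Da" using D_eq_one_of_distinct[OF Dz(1) Da(1) Db(1)] by blast
  then show False using D_adj_parity[OF Da(1,3,2), of z] Dz(3) wz w(3) adj_sym[OF z(2)] by blast
qed

lemma opposite_corners_adjacent: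
  assumes w: "w \<notin> B" "x \<in> X" "E w x" "y \<in> Y" "E w y"
    and z: "z \<notin> B" "x' \<in> X" "E z x'" "y' \<in> Y" "E z y'" and "x \<noteq> x'"
  shows "E w z"
proof -
  obtain Da where Da: "Da \<in> {D1, D2}" "x \<in> Da" "w \<in> Da"
    using corner_D[OF w(1) w(2,3) w(4,5)] by blast
  obtain Db where Db: "Db \<in> {D1, D2}" "x \<notin> Db"
    using corner_D_other_side[OF w(1) w(2,3) w(4,5)] by blast
  obtain Dz where Dz: "Dz \<in> {D1, D2}" "z \<in> Dz" "\<forall>u\<in>X. u \<noteq> x' \<longrightarrow> u \<in> Dz"
    using corner_D_other_side[OF z(1) z(2,3) z(4,5)] by blast
  have "x \<in> Dz" using Dz(3) w(2) \<open>x \<noteq> x'\<close> by auto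
  moreover have "Da \<noteq> Db" using Da(2) Db(2) by blast
  ultimately have "Dz = Da" using D_eq_one_of_distinct[OF Dz(1) Da(1) Db(1)] Db(2) by blast
  moreover have "\<not> E z x" "E x w"
    using outside_at_most_one_X_nbr[OF z(1,2) w(2) z(3)] \<open>x \<noteq> x'\<close> adj_sym[OF w(3)] by blast+
  ultimately show "E w z" using D_adj_parity[OF Da(1) _ Da(2,3), of z] Dz(2) adj_sym by blast
qed

lemma B_nbhd_of_corner:
  assumes "w \<notin> B" "x \<in> X" "y \<in> Y" "E w x" "E w y"
  shows "nbhd E w \<inter> B = {x, y}"
  using outside_at_most_one_X_nbr[OF assms(1,2) _ assms(4)] outside_at_most_one_Y_nbr[OF assms(1,3) _ assms(5)]
    assms(2-5) XY_union unfolding nbhd_def by blast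

lemma B_nbhd_of_X_pendant:
  assumes "w \<notin> B" "x \<in> X" "E w x" "\<forall>y\<in>Y. \<not> E w y"
  shows "nbhd E w \<inter> B = {x}"
  using outside_at_most_one_X_nbr[OF assms(1,2) _ assms(3)] assms(2-4) XY_union unfolding nbhd_def
  by blast

lemma outside_with_B_nbr_cases:
  assumes "\<exists>b\<in>B. E w b"
  obtains (corner) x y where "x \<in> X" "y \<in> Y" "E w x" "E w y"
    | (X_pendant) x where "x \<in> X" "E w x" "\<forall>y\<in>Y. \<not> E w y"
    | (Y_pendant) y where "y \<in> Y" "E w y" "\<forall>x\<in>X. \<not> E w x"
  using assms XY_union by blast

lemma X_pendant_has_no_attached_outside_nbr:
  assumes w: "w \<notin> B" "x \<in> X" "E w x" "\<forall>y\<in>Y. \<not> E w y"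
    and z: "z \<notin> B" "\<exists>b\<in>B. E z b" and wz: "E w z"
  shows False
  using z(2)
proof (cases rule: outside_with_B_nbr_cases)
  case (corner s t)
  then show False using X_pendant_excludes_corner[OF w z(1)] by blast
next
  case (X_pendant s)
  then have "s = x" using X_pendants_share_attachment[OF w z(1)] by blast
  then show False using X_pendants_at_same_vertex_nonadjacent[OF w z(1)] X_pendant wz by blast
next
  case (Y_pendant t)
  then show False using X_pendant_Y_pendant_nonadjacent[OF w z(1)] wz by blast
qed

lemma adjacent_attached_outside_are_opposite_corners:
  assumes w: "w \<notin> B" "\<exists>b\<in>B. E w b" and z: "z \<notin> B" "\<exists>b\<in>B. E z b" and wz: "E w z"
  obtains x x' y y' where "x \<in> X" "x' \<in> X" "y \<in> Y" "y' \<in> Y" "x \<noteq> x'"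
    "E w x" "E w y" "E z x'" "E z y'"
proof -
  interpret swapped: biclique_is_C4 V E B Y X D1 D2 y1 y2 x1 x2 by (rule C4_swap)
  have zw: "E z w" using adj_sym[OF wz] .
  from w(2) show thesis
  proof (cases rule: outside_with_B_nbr_cases)
    case w_corner: (corner x y)
    from z(2) show thesis
    proof (cases rule: outside_with_B_nbr_cases)
      case (corner s t)
      then have "s \<noteq> x"
        using corners_equal_or_opposite[OF w(1) w_corner(1,3,2,4) z(1) corner(1,3,2,4)]
          corners_at_same_place_nonadjacent[OF w(1) w_corner(1,3,2,4) z(1)] wz by blast
      then show thesis using that w_corner corner by blast
    next
      case (X_pendant s)
      then show thesis using X_pendant_has_no_attached_outside_nbr[OF z(1) _ _ _ w zw] by blast
    next
      case (Y_pendant t)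
      then show thesis using swapped.X_pendant_has_no_attached_outside_nbr[OF z(1) _ _ _ w zw] by blast
    qed
  next
    case (X_pendant x)
    then show thesis using X_pendant_has_no_attached_outside_nbr[OF w(1) _ _ _ z wz] by blast
  next
    case (Y_pendant y)
    then show thesis using swapped.X_pendant_has_no_attached_outside_nbr[OF w(1) _ _ _ z wz] by blast
  qed
qed

text \<open>Since outside neighbours of attached outside vertices are opposite corners, two outside
  vertices with the same neighbours in B have the same neighbours everywhere.\<close>
lemma outside_nbr_shared_by_B_twins:
  assumes w: "w \<notin> B" "\<exists>b\<in>B. E w b" and w': "w' \<notin> B"
    and same: "nbhd E w \<inter> B = nbhd E w' \<inter> B"
    and u: "u \<notin> B" "\<exists>b\<in>B. E u b" and wu: "E w u"
  shows "E w' u"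
proof -
  obtain x x' y y' where a: "x \<in> X" "x' \<in> X" "y \<in> Y" "y' \<in> Y" "x \<noteq> x'"
    "E w x" "E w y" "E u x'" "E u y'"
    by (rule adjacent_attached_outside_are_opposite_corners[OF w u wu])
  have "E w' x" "E w' y" using same a(1,3,6,7) X_sub_B Y_sub_B unfolding nbhd_def by blast+
  then show ?thesis using opposite_corners_adjacent[OF w' a(1) _ a(3) _ u(1) a(2,8,4,9,5)] by blast
qed

lemma outside_vertices_with_same_B_nbhd_equal:
  assumes dom: "\<forall>u\<in>V - B. \<exists>b\<in>B. E u b" and w: "w \<in> V" "w \<notin> B" and w': "w' \<in> V" "w' \<notin> B"
    and same: "nbhd E w \<inter> B = nbhd E w' \<inter> B"
  shows "w = w'"
proof -
  have attached: "\<exists>b\<in>B. E u b" if "u \<in> V" "u \<notin> B" for u using dom that by blast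
  have "E w u \<longleftrightarrow> E w' u" for u
  proof (cases "u \<in> B")
    case True
    then show ?thesis using same unfolding nbhd_def by blast
  next
    case False
    show ?thesis
      using outside_nbr_shared_by_B_twins[OF w(2) attached[OF w] w'(2) same False]
        outside_nbr_shared_by_B_twins[OF w'(2) attached[OF w'] w(2) same[symmetric] False]
        attached[OF _ False] adj_snd_in_V by blast
  qed
  then have "nbhd E w = nbhd E w'" unfolding nbhd_def by blast
  then show ?thesis using twin_free w w' unfolding false_twin_free_def by blast
qed

lemma corner_forces_opposite_corner:
  assumes dom: "\<forall>u\<in>V - B. \<exists>b\<in>B. E u b" and w: "w \<in> V" "w \<notin> B"
    and w': "w' \<in> V" "w' \<notin> B" "w \<noteq> w'"
    and c: "x \<in> X" "y \<in> Y" "E w x" "E w y"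
  obtains x' y' where "x' \<in> X" "y' \<in> Y" "x' \<noteq> x" "y' \<noteq> y" "E w' x'" "E w' y'"
proof -
  interpret swapped: biclique_is_C4 V E B Y X D1 D2 y1 y2 x1 x2 by (rule C4_swap)
  have "\<exists>b\<in>B. E w' b" using dom w' by blast
  then show thesis
  proof (cases rule: outside_with_B_nbr_cases)
    case (corner s t)
    have "s \<noteq> x \<and> t \<noteq> y"
    proof (rule ccontr)
      assume "\<not> (s \<noteq> x \<and> t \<noteq> y)"
      then have "s = x" "t = y"
        using corners_equal_or_opposite[OF w(2) c(1,3,2,4) w'(2) corner(1,3,2,4)] by blast+
      then have "nbhd E w \<inter> B = nbhd E w' \<inter> B"
        using B_nbhd_of_corner[OF w(2) c] B_nbhd_of_corner[OF w'(2) corner] by simp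
      then show False using outside_vertices_with_same_B_nbhd_equal[OF dom w w'(1,2)] w'(3) by blast
    qed
    then show thesis using that corner by blast
  next
    case (X_pendant s)
    then show thesis using X_pendant_excludes_corner[OF w'(2) _ _ _ w(2) c(1,3,2,4)] by blast
  next
    case (Y_pendant t)
    then show thesis using swapped.X_pendant_excludes_corner[OF w'(2) _ _ _ w(2) c(2,4,1,3)] by blast
  qed
qed

lemma X_pendant_forces_Y_pendant:
  assumes dom: "\<forall>u\<in>V - B. \<exists>b\<in>B. E u b" and w: "w \<in> V" "w \<notin> B"
    and w': "w' \<in> V" "w' \<notin> B" "w \<noteq> w'"
    and p: "x \<in> X" "E w x" "\<forall>y\<in>Y. \<not> E w y"
  shows "\<forall>x'\<in>X. \<not> E w' x'"
proof -
  have "\<exists>b\<in>B. E w' b" using dom w' by blast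
  then show ?thesis
  proof (cases rule: outside_with_B_nbr_cases)
    case (corner s t)
    then show ?thesis using X_pendant_excludes_corner[OF w(2) p w'(2) corner(1,3,2,4)] by blast
  next
    case (X_pendant s)
    then have "s = x" using X_pendants_share_attachment[OF w(2) p w'(2)] by blast
    then have "nbhd E w \<inter> B = nbhd E w' \<inter> B"
      using B_nbhd_of_X_pendant[OF w(2) p] B_nbhd_of_X_pendant[OF w'(2) X_pendant] by simp
    then show ?thesis using outside_vertices_with_same_B_nbhd_equal[OF dom w w'(1,2)] w'(3) by blast
  next
    case (Y_pendant t)
    then show ?thesis by blast
  qed
qed

lemma no_three_outside_with_X_pendant:
  assumes dom: "\<forall>u\<in>V - B. \<exists>b\<in>B. E u b"
    and w1: "w1 \<in> V" "w1 \<notin> B" and w2: "w2 \<in> V" "w2 \<notin> B" and w3: "w3 \<in> V" "w3 \<notin> B"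
    and ne: "w1 \<noteq> w2" "w1 \<noteq> w3" "w2 \<noteq> w3"
    and p: "x \<in> X" "E w1 x" "\<forall>y\<in>Y. \<not> E w1 y"
  shows False
proof -
  interpret swapped: biclique_is_C4 V E B Y X D1 D2 y1 y2 x1 x2 by (rule C4_swap)
  have no_X: "\<forall>x'\<in>X. \<not> E w2 x'" "\<forall>x'\<in>X. \<not> E w3 x'"
    using X_pendant_forces_Y_pendant[OF dom w1 w2 ne(1) p] X_pendant_forces_Y_pendant[OF dom w1 w3 ne(2) p]
    by blast+
  obtain y where "y \<in> Y" "E w2 y" using dom w2 no_X(1) XY_union by blast
  then have "\<forall>y'\<in>Y. \<not> E w3 y'" using swapped.X_pendant_forces_Y_pendant[OF dom w2 w3 ne(3) _ _ no_X(1)] by blast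
  then show False using dom w3 no_X(2) XY_union by blast
qed

lemma no_three_outside:
  assumes dom: "\<forall>u\<in>V - B. \<exists>b\<in>B. E u b"
    and w1: "w1 \<in> V" "w1 \<notin> B" and w2: "w2 \<in> V" "w2 \<notin> B" and w3: "w3 \<in> V" "w3 \<notin> B"
    and ne: "w1 \<noteq> w2" "w1 \<noteq> w3" "w2 \<noteq> w3"
  shows False
proof -
  interpret swapped: biclique_is_C4 V E B Y X D1 D2 y1 y2 x1 x2 by (rule C4_swap)
  have "\<exists>b\<in>B. E w1 b" using dom w1 by blast
  then show False
  proof (cases rule: outside_with_B_nbr_cases)
    case (corner x y)
    \<comment> \<open>w2 and w3 both sit at the corner opposite to x, yet each must be opposite to the other.\<close>
    obtain x2 y2' where c2: "x2 \<in> X" "y2' \<in> Y" "x2 \<noteq> x" "E w2 x2" "E w2 y2'"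
      using corner_forces_opposite_corner[OF dom w1 w2 ne(1) corner] by blast
    obtain x3 where c3: "x3 \<in> X" "x3 \<noteq> x" "E w3 x3"
      using corner_forces_opposite_corner[OF dom w1 w3 ne(2) corner] by blast
    obtain x3' where c3': "x3' \<in> X" "x3' \<noteq> x2" "E w3 x3'"
      using corner_forces_opposite_corner[OF dom w2 w3 ne(3) c2(1,2,4,5)] by blast
    have "x3 = x3'" using outside_at_most_one_X_nbr[OF w3(2) c3(1) c3'(1) c3(3) c3'(3)] .
    then show False using corner(1) c2(1,3) c3(1,2) c3'(2) X_eq by blast
  next
    case (X_pendant x)
    then show False using no_three_outside_with_X_pendant[OF dom w1 w2 w3 ne] by blast
  next
    case (Y_pendant y)
    then show False using swapped.no_three_outside_with_X_pendant[OF dom w1 w2 w3 ne] by blast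
  qed
qed

lemma outside_has_B_nbr:
  assumes conn: "connected_graph V E"
  shows "\<forall>u\<in>V - B. \<exists>b\<in>B. E u b"
proof -
  interpret swapped: biclique_is_C4 V E B Y X D1 D2 y1 y2 x1 x2 by (rule C4_swap)
  let ?U = "B \<union> {w. \<exists>b\<in>B. E w b}"
  have "t \<in> ?U" if s: "s \<in> ?U" and st: "E s t" for s t
  proof (cases "s \<in> B \<or> t \<in> B")
    case True
    then show ?thesis using adj_sym[OF st] by blast
  next
    case False
    then obtain u where u: "u \<in> B" "E s u" using s by blast
    then consider "u \<in> X" | "u \<in> Y" using XY_union by blast
    then show ?thesis
      using outside_nbr_of_X_attached_has_B_nbr[of s u t] swapped.outside_nbr_of_X_attached_has_B_nbr[of s u t]
        u False st by cases blast+
  qed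
  then have "V \<subseteq> ?U" using connected_graph_closed_superset[OF conn, of x1] X_eq B_sub XY_union by blast
  then show ?thesis by blast
qed

lemma C4_excluded:
  assumes conn: "connected_graph V E" and large: "7 \<le> card V"
  shows False
proof -
  have "finite (V - B)" using finite_V by blast
  then have "card (V - B) \<le> 2"
    using card_le_2_if_no_three no_three_outside[OF outside_has_B_nbr[OF conn]] by blast
  moreover have "card B = 4"
  proof -
    have "B = {x1, x2, y1, y2}" using X_eq Y_eq XY_union by blast
    moreover have "x1 \<notin> Y" "x2 \<notin> Y" using XY_disj X_eq by blast+
    ultimately show ?thesis using x_ne y_ne Y_eq by auto
  qed
  moreover have "card V = card B + card (V - B)"
    using card_Un_disjoint[of B "V - B"] finite_V B_sub by (simp add: Un_absorb1 finite_subset)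
  ultimately show False using large by simp
qed

end

context biclique_of_degree_le_2
begin

lemma claw_centre_in_X:
  assumes "v \<in> X" "a \<in> B" "b \<in> B" "c \<in> B" "E v a" "E v b" "E v c" "a \<noteq> b" "a \<noteq> c" "b \<noteq> c"
  shows "biclique_with_claw V E B X Y D1 D2 v a b c"
proof -
  have "a \<in> Y" "b \<in> Y" "c \<in> Y" using X_indep assms(1-7) XY_union by blast+
  then show ?thesis using assms(1,8-10)
    by (intro biclique_with_claw.intro biclique_of_degree_le_2_axioms) unfold_locales
qed

lemma C4_vertex_in_X:
  assumes B: "B = {a, b, c, d}" and "distinct [a, b, c, d]" and "E a b" "E b c" "E d a" and a: "a \<in> X"
  shows "biclique_is_C4 V E B X Y D1 D2 a c b d"
proof -
  have in_B: "a \<in> B" "b \<in> B" "c \<in> B" "d \<in> B" using B by auto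
  have "b \<notin> X" "d \<notin> X" using X_indep a assms(3,5) adj_sym by blast+
  then have bd: "b \<in> Y" "d \<in> Y" using in_B XY_union by blast+
  then have "c \<notin> Y" using Y_indep assms(4) by blast
  then have "c \<in> X" using in_B XY_union by blast
  then have "X = {a, c}" "Y = {b, d}" using a bd B XY_disj XY_union by blast+
  then show ?thesis using assms(2)
    by (intro biclique_is_C4.intro biclique_of_degree_le_2_axioms) (unfold_locales, auto)
qed

lemma no_induced_claw:
  assumes conn: "connected_graph V E" and large: "7 \<le> card V" and claw: "has_induced_claw E B"
  shows False
proof -
  interpret swapped: biclique_of_degree_le_2 V E B Y X D1 D2 by (rule swap)
  obtain v a b c where "v \<in> B" and cl: "a \<in> B" "b \<in> B" "c \<in> B" "E v a" "E v b" "E v c"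
      "a \<noteq> b" "a \<noteq> c" "b \<noteq> c"
    using claw unfolding has_induced_claw_def by blast
  then consider "v \<in> X" | "v \<in> Y" using XY_union by blast
  then show False
  proof cases
    case 1
    then have "biclique_with_claw V E B X Y D1 D2 v a b c" by (rule claw_centre_in_X[OF _ cl])
    then show False by (rule biclique_with_claw.claw_excluded[OF _ conn large])
  next
    case 2
    then have "biclique_with_claw V E B Y X D1 D2 v a b c" by (rule swapped.claw_centre_in_X[OF _ cl])
    then show False by (rule biclique_with_claw.claw_excluded[OF _ conn large])
  qed
qed

lemma no_induced_C4:
  assumes conn: "connected_graph V E" and large: "7 \<le> card V" and C4: "induces_C4 E B"
  shows False
proof -
  interpret swapped: biclique_of_degree_le_2 V E B Y X D1 D2 by (rule swap)
  obtain a b c d where C: "B = {a, b, c, d}" "distinct [a, b, c, d]" "E a b" "E b c" "E d a"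
    using C4 unfolding induces_C4_def by blast
  then consider "a \<in> X" | "a \<in> Y" using XY_union by blast
  then show False
  proof cases
    case 1
    then have "biclique_is_C4 V E B X Y D1 D2 a c b d" by (rule C4_vertex_in_X[OF C])
    then show False by (rule biclique_is_C4.C4_excluded[OF _ conn large])
  next
    case 2
    then have "biclique_is_C4 V E B Y X D1 D2 a c b d" by (rule swapped.C4_vertex_in_X[OF C])
    then show False by (rule biclique_is_C4.C4_excluded[OF _ conn large])
  qed
qed

end

lemma biclique_of_degree_le_2_exists:
  assumes simple: "simple_graph V E" and twin_free: "false_twin_free V E"
    and B: "B \<in> bicliques V E" and deg: "degree (KB_adj V E) B \<le> 2"
  obtains X Y D1 D2 where "biclique_of_degree_le_2 V E B X Y D1 D2"
proof -
  obtain D1 D2 where D: "D1 \<in> bicliques V E" "D2 \<in> bicliques V E"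
    and cover: "\<And>S. S \<subseteq> V \<Longrightarrow> induces_complete_bipartite E S \<Longrightarrow> S \<inter> B \<noteq> {} \<Longrightarrow> \<not> S \<subseteq> B
      \<Longrightarrow> S \<subseteq> D1 \<or> S \<subseteq> D2"
    using biclique_degree_le_2_cover[OF simple B deg] by blast
  have Bb: "is_biclique V E B" using B unfolding bicliques_def by blast
  then have "induces_complete_bipartite E B" unfolding is_biclique_def by blast
  then obtain X Y where XY: "X \<noteq> {}" "Y \<noteq> {}" "X \<inter> Y = {}" "X \<union> Y = B"
     "\<forall>x\<in>X. \<forall>x'\<in>X. \<not> E x x'" "\<forall>y\<in>Y. \<forall>y'\<in>Y. \<not> E y y'" "\<forall>x\<in>X. \<forall>y\<in>Y. E x y"
    unfolding induces_complete_bipartite_def by blast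
  have "biclique_of_degree_le_2 V E B X Y D1 D2"
  proof
    show "B \<subseteq> V" "\<forall>B'. B \<subseteq> B' \<and> B' \<subseteq> V \<and> induces_complete_bipartite E B' \<longrightarrow> B' = B"
      using Bb unfolding is_biclique_def by blast+
    show "induces_complete_bipartite E D1" "induces_complete_bipartite E D2"
      using D unfolding bicliques_def is_biclique_def by blast+
    show "\<And>S. S \<subseteq> V \<Longrightarrow> induces_complete_bipartite E S \<Longrightarrow> S \<inter> B \<noteq> {} \<Longrightarrow> \<not> S \<subseteq> B
      \<Longrightarrow> S \<subseteq> D1 \<or> S \<subseteq> D2" by (fact cover)
  qed (fact simple twin_free XY)+
  then show thesis by (rule that)
qed

theorem lemma3:
  fixes V :: "'a set" and E :: "'a \<Rightarrow> 'a \<Rightarrow> bool" and B :: "'a set"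
  assumes "simple_graph V E"
    and "connected_graph V E"
    and "false_twin_free V E"
    and "card V \<ge> 7"
    and "B \<in> bicliques V E"
    and "has_induced_claw E B \<or> induces_C4 E B"
  shows "degree (KB_adj V E) B \<ge> 3"
proof (rule ccontr)
  assume "\<not> degree (KB_adj V E) B \<ge> 3"
  then obtain X Y D1 D2 where "biclique_of_degree_le_2 V E B X Y D1 D2"
    using biclique_of_degree_le_2_exists[OF assms(1,3,5)] by fastforce
  then show False
    using biclique_of_degree_le_2.no_induced_claw biclique_of_degree_le_2.no_induced_C4 assms(2,4,6)
    by blast
qed

end
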